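(* For the continuous-time (Hamiltonian) one-item Grover search problem with $N>1$, the minimum query time $T$ for which there exists a protocol with $P_{win}=1$ is $$T=\frac{1}{\pi}\frac{N}{\sqrt{N-1}}\arccos\frac{1}{\sqrt N}.$$ Asymptotically this equals $\frac12\sqrt N-\frac1\pi+O(1/\sqrt N)$.
   Context: Oracle-problem framework (continuous case). We are given finite-dimensional Hilbert spaces $\mathcal{A},\mathcal{M},\mathcal{M}'$, a pure state $|\psi_0\rangle\in\mathcal{A}$, a Hermitian $H$ on $\mathcal{A}\otimes\mathcal{M}$, and positive operators $\{\Pi_x\}$ on $\mathcal{A}\otimes\mathcal{M}'$. A protocol with query time $T$ and success probability $P_{win}$ consists of positive operators $\rho(t)$ on $\mathcal{A}$ and $\tilde\rho(t)$ on $\mathcal{A}\otimes\mathcal{M}$ for $0\le t\le T$ ($\tilde\rho$ continuous), and $\tilde\rho'$ on $\mathcal{A}\otimes\mathcal{M}'$, such that: - $\rho(0)=|\psi_0\rangle\langle\psi_0|$; - $\mathrm{Tr}_\mathcal{M}\tilde\rho(t)=\rho(t)$; - $\frac{d}{dt}\rho(t)=-i\,\mathrm{Tr}_\mathcal{M}[H\tilde\rho(t)-\tilde\rho(t)H]$; - $\mathrm{Tr}_{\mathcal{M}'}\tilde\rho'=\rho(T)$; - $P_{win}\le\mathrm{Tr}[\Pi_x\tilde\rho']$ for all $x$. One-item Grover search. Take $\mathcal{A}=\mathrm{span}\{|j\rangle: j\in\{1,\dots,N\}\}$ and $\mathcal{M}=\mathcal{M}'=\mathrm{span}\{|j\rangle: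 j\in\{0,1,\dots,N\}\}$. Set $|\psi_0\rangle=N^{-1/2}\sum_{j=1}^N|j\rangle$ and $H=\pi\sum_{j=1}^N|j\rangle\langle j|_\mathcal{A}\otimes|j\rangle\langle j|_\mathcal{M}$. The verification operators are $\Pi_j=N|j\rangle\langle j|_\mathcal{A}\otimes|j\rangle\langle j|_{\mathcal{M}'}$ for $j=1,\dots,N$. *)

theory Defs
  imports "HOL-Analysis.Analysis" "HOL-Library.Landau_Symbols"
begin

text \<open>Operators on finite-dimensional spaces are represented by their matrix
  entries (kernels) with respect to a fixed orthonormal basis indexed by a finite
  index set I; entries outside I are irrelevant.  Spaces M = M': basis |m>, m in {0..N}.\<close>

definition idxA :: "nat \<Rightarrow> nat set" where "idxA N = {1..N}"
definition idxM :: "nat \<Rightarrow> nat set" where "idxM N = {0..N}"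
definition idxAM :: "nat \<Rightarrow> (nat \<times> nat) set" where "idxAM N = idxA N \<times> idxM N"

definition psd_op :: "'i set \<Rightarrow> ('i \<Rightarrow> 'i \<Rightarrow> complex) \<Rightarrow> bool" where
  "psd_op I X \<longleftrightarrow> (\<forall>v :: 'i \<Rightarrow> complex.
     (\<Sum>a\<in>I. \<Sum>b\<in>I. cnj (v a) * X a b * v b) \<in> \<real> \<and>
     0 \<le> Re (\<Sum>a\<in>I. \<Sum>b\<in>I. cnj (v a) * X a b * v b))"

definition op_mult :: "'i set \<Rightarrow> ('i \<Rightarrow> 'i \<Rightarrow> complex) \<Rightarrow> ('i \<Rightarrow> 'i \<Rightarrow> complex) \<Rightarrow> ('i \<Rightarrow> 'i \<Rightarrow> complex)" where
  "op_mult I X Y = (\<lambda>a b. \<Sum>c\<in>I. X a c * Y c b)"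

definition op_trace :: "'i set \<Rightarrow> ('i \<Rightarrow> 'i \<Rightarrow> complex) \<Rightarrow> complex" where
  "op_trace I X = (\<Sum>a\<in>I. X a a)"

definition ptrace2 :: "'k set \<Rightarrow> ('j \<times> 'k \<Rightarrow> 'j \<times> 'k \<Rightarrow> complex) \<Rightarrow> ('j \<Rightarrow> 'j \<Rightarrow> complex)" where
  "ptrace2 K X = (\<lambda>j j'. \<Sum>m\<in>K. X (j, m) (j', m))"

definition psi0 :: "nat \<Rightarrow> nat \<Rightarrow> complex" where
  "psi0 N j = complex_of_real (1 / sqrt (real N))"

definition groverH :: "nat \<Rightarrow> nat \<times> nat \<Rightarrow> nat \<times> nat \<Rightarrow> complex" where
  "groverH N = (\<lambda>(a, m) (a', m').
      if a = a' \<and> m = m' \<and> a = m \<and> a \<in> idxA N then complex_of_real pi else 0)"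

definition groverPi :: "nat \<Rightarrow> nat \<Rightarrow> nat \<times> nat \<Rightarrow> nat \<times> nat \<Rightarrow> complex" where
  "groverPi N x = (\<lambda>(a, m) (a', m').
      if a = x \<and> a' = x \<and> m = x \<and> m' = x then of_nat N else 0)"

definition grover_protocol ::
  "nat \<Rightarrow> real \<Rightarrow> real \<Rightarrow> (real \<Rightarrow> nat \<Rightarrow> nat \<Rightarrow> complex)
    \<Rightarrow> (real \<Rightarrow> nat \<times> nat \<Rightarrow> nat \<times> nat \<Rightarrow> complex)
    \<Rightarrow> (nat \<times> nat \<Rightarrow> nat \<times> nat \<Rightarrow> complex) \<Rightarrow> bool" where
  "grover_protocol N T P \<rho> \<rho>t \<rho>' \<longleftrightarrow>
     0 \<le> T \<and>
     (\<forall>t\<in>{0..T}. psd_op (idxA N) (\<rho> t)) \<and>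
     (\<forall>t\<in>{0..T}. psd_op (idxAM N) (\<rho>t t)) \<and>
     psd_op (idxAM N) \<rho>' \<and>
     (\<forall>a\<in>idxAM N. \<forall>b\<in>idxAM N. continuous_on {0..T} (\<lambda>t. \<rho>t t a b)) \<and>
     (\<forall>j\<in>idxA N. \<forall>j'\<in>idxA N. \<rho> 0 j j' = psi0 N j * cnj (psi0 N j')) \<and>
     (\<forall>t\<in>{0..T}. \<forall>j\<in>idxA N. \<forall>j'\<in>idxA N.
        ptrace2 (idxM N) (\<rho>t t) j j' = \<rho> t j j') \<and>
     (\<forall>t\<in>{0..T}. \<forall>j\<in>idxA N. \<forall>j'\<in>idxA N.
        ((\<lambda>s. \<rho> s j j') has_vector_derivative
           (- \<i> * ptrace2 (idxM N)
               (\<lambda>a b. op_mult (idxAM N) (groverH N) (\<rho>t t) a b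
                      - op_mult (idxAM N) (\<rho>t t) (groverH N) a b) j j'))
         (at t within {0..T})) \<and>
     (\<forall>j\<in>idxA N. \<forall>j'\<in>idxA N. ptrace2 (idxM N) \<rho>' j j' = \<rho> T j j') \<and>
     (\<forall>x\<in>idxA N. P \<le> Re (op_trace (idxAM N) (op_mult (idxAM N) (groverPi N x) \<rho>')))"

end

theory Submission
  imports Defs "HOL-Real_Asymp.Real_Asymp"
begin

(* Along a protocol the diagonal of rho(t) stays at 1/N, because H is diagonal on A.  What moves
   is the overlap f(t) = <psi0|rho(t)|psi0>: f(0) = 1, and certain success forces f(T) <= 1/N.
   Testing positivity of the purification rho~(t) against the vectors sum_j |j,m> and
   |m,m> - (1/N) sum_j |j,m> bounds the speed, |f'| <= 2 w sqrt (f (1 - f)) with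
   w = pi sqrt (N - 1) / N.  So arccos (sqrt f) grows at rate at most w, and
   T >= arccos (1 / sqrt N) / w.
   The bound is attained by a pure purification that puts amplitude
   (cos wt - i sqrt (N - 1) sin wt) / N on |j,j> and (cos wt + i sin wt / sqrt (N - 1)) / N on |j,m>
   for m <> j, m > 0.  At time T its reduced state is I/N, and I/N is also the reduced state of
   (1/N) sum_j |j,j><j,j|, which wins with certainty. *)

section \<open>Sesquilinear forms of positive operators\<close>

definition op_form :: "'i set \<Rightarrow> ('i \<Rightarrow> 'i \<Rightarrow> complex) \<Rightarrow> ('i \<Rightarrow> complex) \<Rightarrow> ('i \<Rightarrow> complex) \<Rightarrow> complex"
  where "op_form I X v w = (\<Sum>a\<in>I. \<Sum>b\<in>I. cnj (v a) * X a b * w b)"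

lemma op_form_cong:
  "(\<And>a. a \<in> I \<Longrightarrow> v a = v' a) \<Longrightarrow> (\<And>a. a \<in> I \<Longrightarrow> w a = w' a) \<Longrightarrow> op_form I X v w = op_form I X v' w'"
  unfolding op_form_def by (intro sum.cong refl) auto

lemma op_form_add_left: "op_form I X (\<lambda>a. v a + v' a) w = op_form I X v w + op_form I X v' w"
  unfolding op_form_def by (simp add: distrib_left distrib_right sum.distrib)

lemma op_form_add_right: "op_form I X v (\<lambda>a. w a + w' a) = op_form I X v w + op_form I X v w'"
  unfolding op_form_def by (simp add: distrib_left distrib_right sum.distrib)

lemma op_form_scale_left: "op_form I X (\<lambda>a. c * v a) w = cnj c * op_form I X v w"
  unfolding op_form_def by (simp add: sum_distrib_left mult.assoc)

lemma op_form_scale_right: "op_form I X v (\<lambda>a. c * w a) = c * op_form I X v w"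
  unfolding op_form_def by (simp add: sum_distrib_left mult_ac)

lemma op_form_diff_left: "op_form I X (\<lambda>a. v a - v' a) w = op_form I X v w - op_form I X v' w"
  unfolding op_form_def by (simp add: algebra_simps sum_subtractf)

lemma op_form_diff_right: "op_form I X v (\<lambda>a. w a - w' a) = op_form I X v w - op_form I X v w'"
  unfolding op_form_def by (simp add: algebra_simps sum_subtractf)

lemma op_form_sum_left: "op_form I X (\<lambda>a. \<Sum>k\<in>K. d k a) w = (\<Sum>k\<in>K. op_form I X (d k) w)"
  unfolding op_form_def by (simp add: sum_distrib_left sum_distrib_right sum.swap[of _ K])

lemma op_form_sum_right: "op_form I X v (\<lambda>a. \<Sum>k\<in>K. d k a) = (\<Sum>k\<in>K. op_form I X v (d k))"
  unfolding op_form_def by (simp add: sum_distrib_left sum_distrib_right sum.swap[of _ K])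

lemma op_form_diff_swap:
  "op_form I X (\<lambda>a. v a - w a) (\<lambda>a. v a - w a) = op_form I X (\<lambda>a. w a - v a) (\<lambda>a. w a - v a)"
  by (simp add: op_form_diff_left op_form_diff_right)

definition basis_vec :: "'i \<Rightarrow> 'i \<Rightarrow> complex"
  where "basis_vec a = (\<lambda>x. if x = a then 1 else 0)"

lemma op_form_basis_vec:
  assumes "finite I" "a \<in> I" "b \<in> I"
  shows "op_form I X (basis_vec a) (basis_vec b) = X a b"
proof -
  have row: "(\<Sum>y\<in>I. cnj (basis_vec a x) * X x y * basis_vec b y) = cnj (basis_vec a x) * X x b" for x
  proof -
    have "(\<Sum>y\<in>I. cnj (basis_vec a x) * X x y * basis_vec b y)
        = (\<Sum>y\<in>I. if y = b then cnj (basis_vec a x) * X x b else 0)"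
      by (intro sum.cong refl) (simp add: basis_vec_def)
    then show ?thesis using assms by simp
  qed
  have "op_form I X (basis_vec a) (basis_vec b) = (\<Sum>x\<in>I. cnj (basis_vec a x) * X x b)"
    unfolding op_form_def row ..
  also have "\<dots> = (\<Sum>x\<in>I. if x = a then X a b else 0)"
    by (intro sum.cong refl) (simp add: basis_vec_def)
  finally show ?thesis using assms by simp
qed

lemma op_form_basis_vec_diff:
  assumes "finite I" "a \<in> I" "b \<in> I"
  shows "op_form I X (\<lambda>x. basis_vec a x - basis_vec b x) (\<lambda>x. basis_vec a x - basis_vec b x)
    = X a a - X a b - X b a + X b b"
  using assms by (simp add: op_form_diff_left op_form_diff_right op_form_basis_vec)

lemma psd_op_form_real: "psd_op I X \<Longrightarrow> op_form I X v v \<in> \<real>"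
  unfolding psd_op_def op_form_def by blast

lemma psd_op_form_nonneg: "psd_op I X \<Longrightarrow> 0 \<le> Re (op_form I X v v)"
  unfolding psd_op_def op_form_def by blast

lemma psd_op_cong:
  "(\<And>a b. a \<in> I \<Longrightarrow> b \<in> I \<Longrightarrow> X a b = Y a b) \<Longrightarrow> psd_op I X = psd_op I Y"
  unfolding psd_op_def by (simp cong: sum.cong)

lemma psd_op_diag_nonneg: "finite I \<Longrightarrow> psd_op I X \<Longrightarrow> a \<in> I \<Longrightarrow> 0 \<le> Re (X a a)"
  using psd_op_form_nonneg[of I X "basis_vec a"] op_form_basis_vec[of I a a X] by simp

lemma psd_op_cross_le:
  assumes "psd_op I X"
  shows "Re (op_form I X v w + op_form I X w v) \<le> Re (op_form I X v v) + Re (op_form I X w w)"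
proof -
  have "0 \<le> Re (op_form I X (\<lambda>a. v a - w a) (\<lambda>a. v a - w a))"
    by (rule psd_op_form_nonneg[OF assms])
  also have "op_form I X (\<lambda>a. v a - w a) (\<lambda>a. v a - w a)
      = op_form I X v v - op_form I X v w - op_form I X w v + op_form I X w w"
    by (simp add: op_form_diff_left op_form_diff_right)
  finally show ?thesis by simp
qed

lemma psd_op_cross_le_scaled:
  fixes a b :: real
  assumes "psd_op I X"
  shows "a * b * Re (op_form I X v w + op_form I X w v)
    \<le> a\<^sup>2 * Re (op_form I X v v) + b\<^sup>2 * Re (op_form I X w w)"
  using psd_op_cross_le[OF assms, of "\<lambda>x. of_real a * v x" "\<lambda>x. of_real b * w x"]
  by (simp add: op_form_scale_left op_form_scale_right power2_eq_square algebra_simps)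

lemma psd_op_form_sum_le:
  assumes "psd_op I X" "finite K"
  shows "Re (op_form I X (\<lambda>a. \<Sum>k\<in>K. d k a) (\<lambda>a. \<Sum>k\<in>K. d k a))
    \<le> real (card K) * (\<Sum>k\<in>K. Re (op_form I X (d k) (d k)))"
proof -
  have "2 * Re (op_form I X (\<lambda>a. \<Sum>k\<in>K. d k a) (\<lambda>a. \<Sum>k\<in>K. d k a))
      = (\<Sum>k\<in>K. \<Sum>l\<in>K. Re (op_form I X (d k) (d l) + op_form I X (d l) (d k)))"
  proof -
    have "op_form I X (\<lambda>a. \<Sum>k\<in>K. d k a) (\<lambda>a. \<Sum>k\<in>K. d k a) = (\<Sum>k\<in>K. \<Sum>l\<in>K. op_form I X (d k) (d l))"
      by (simp add: op_form_sum_left op_form_sum_right)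
    moreover have "(\<Sum>k\<in>K. \<Sum>l\<in>K. Re (op_form I X (d l) (d k))) = (\<Sum>k\<in>K. \<Sum>l\<in>K. Re (op_form I X (d k) (d l)))"
      by (rule sum.swap)
    ultimately show ?thesis by (simp only: sum.distrib Re_sum mult_2 plus_complex.sel)
  qed
  also have "\<dots> \<le> (\<Sum>k\<in>K. \<Sum>l\<in>K. Re (op_form I X (d k) (d k)) + Re (op_form I X (d l) (d l)))"
    by (intro sum_mono psd_op_cross_le[OF assms(1)])
  also have "\<dots> = 2 * (real (card K) * (\<Sum>k\<in>K. Re (op_form I X (d k) (d k))))"
    by (simp add: sum.distrib sum_distrib_left)
  finally show ?thesis by simp
qed

lemma affine_nonneg_imp_slope_zero:
  fixes \<alpha> \<beta> :: real
  assumes "\<And>r. 0 \<le> r * \<alpha> + \<beta>"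
  shows "\<alpha> = 0"
proof (rule ccontr)
  assume "\<alpha> \<noteq> 0"
  then have "(-(\<bar>\<beta>\<bar> + 1) / \<alpha>) * \<alpha> + \<beta> = \<beta> - \<bar>\<beta>\<bar> - 1" by simp
  with assms show False by (smt (verit))
qed

lemma psd_op_form_add_null:
  assumes psd: "psd_op I X" and null: "Re (op_form I X w w) = 0"
  shows "Re (op_form I X (\<lambda>x. v x + w x) (\<lambda>x. v x + w x)) = Re (op_form I X v v)"
proof -
  have "- Re (op_form I X v w + op_form I X w v) = 0"
  proof (rule affine_nonneg_imp_slope_zero[where \<beta> = "Re (op_form I X v v)"])
    fix r :: real
    show "0 \<le> r * (- Re (op_form I X v w + op_form I X w v)) + Re (op_form I X v v)"
      using psd_op_cross_le_scaled[OF psd, of 1 r v w] null by (simp add: algebra_simps)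
  qed
  then show ?thesis using null by (simp add: op_form_add_left op_form_add_right)
qed

lemma psd_op_form_sum_null:
  assumes "psd_op I X" "finite K" "\<And>k. k \<in> K \<Longrightarrow> Re (op_form I X (d k) (d k)) = 0"
  shows "Re (op_form I X (\<lambda>x. \<Sum>k\<in>K. d k x) (\<lambda>x. \<Sum>k\<in>K. d k x)) = 0"
  using psd_op_form_sum_le[OF assms(1,2), of d] psd_op_form_nonneg[OF assms(1), of "\<lambda>x. \<Sum>k\<in>K. d k x"] assms(3)
  by simp

lemma psd_op_rank_one: "psd_op I (\<lambda>a b. u a * cnj (u b))"
  unfolding psd_op_def
proof
  fix v :: "'a \<Rightarrow> complex"
  define z where "z = (\<Sum>a\<in>I. cnj (v a) * u a)"
  have "(\<Sum>a\<in>I. \<Sum>b\<in>I. cnj (v a) * (u a * cnj (u b)) * v b) = z * cnj z"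
    unfolding z_def by (simp add: sum_product mult_ac)
  then show "(\<Sum>a\<in>I. \<Sum>b\<in>I. cnj (v a) * (u a * cnj (u b)) * v b) \<in> \<real>
      \<and> 0 \<le> Re (\<Sum>a\<in>I. \<Sum>b\<in>I. cnj (v a) * (u a * cnj (u b)) * v b)"
    by (simp add: complex_mult_cnj)
qed

lemma psd_op_diagonal:
  assumes "finite I" "\<And>a. a \<in> I \<Longrightarrow> 0 \<le> d a"
  shows "psd_op I (\<lambda>a b. if a = b then complex_of_real (d a) else 0)"
  unfolding psd_op_def
proof
  fix v :: "'a \<Rightarrow> complex"
  have "(\<Sum>a\<in>I. \<Sum>b\<in>I. cnj (v a) * (if a = b then complex_of_real (d a) else 0) * v b)
      = (\<Sum>a\<in>I. complex_of_real (d a * (cmod (v a))\<^sup>2))"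
  proof (rule sum.cong[OF refl])
    fix a assume "a \<in> I"
    have "(\<Sum>b\<in>I. cnj (v a) * (if a = b then complex_of_real (d a) else 0) * v b)
        = (\<Sum>b\<in>I. if a = b then complex_of_real (d a) * (v a * cnj (v a)) else 0)"
      by (intro sum.cong refl) (simp add: mult_ac)
    then show "(\<Sum>b\<in>I. cnj (v a) * (if a = b then complex_of_real (d a) else 0) * v b)
        = complex_of_real (d a * (cmod (v a))\<^sup>2)"
      using \<open>a \<in> I\<close> assms(1) by (simp add: complex_mult_cnj cmod_power2)
  qed
  then show "(\<Sum>a\<in>I. \<Sum>b\<in>I. cnj (v a) * (if a = b then complex_of_real (d a) else 0) * v b) \<in> \<real>
      \<and> 0 \<le> Re (\<Sum>a\<in>I. \<Sum>b\<in>I. cnj (v a) * (if a = b then complex_of_real (d a) else 0) * v b)"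
    using assms(2) by (auto intro!: sum_nonneg simp flip: of_real_sum)
qed

lemma op_form_slice:
  fixes J :: "'j set" and K :: "'k set" and v :: "'j \<Rightarrow> complex"
  assumes fin: "finite J" "finite K" and m: "m \<in> K"
  defines "w \<equiv> \<lambda>(a, k). if k = m then v a else 0"
  shows "op_form (J \<times> K) X w w = (\<Sum>a\<in>J. \<Sum>b\<in>J. cnj (v a) * X (a, m) (b, m) * v b)"
proof -
  have "op_form (J \<times> K) X w w = (\<Sum>a\<in>J. \<Sum>k\<in>K. \<Sum>b\<in>J. \<Sum>k'\<in>K. cnj (w (a, k)) * X (a, k) (b, k') * w (b, k'))"
    unfolding op_form_def by (simp only: sum.cartesian_product')
  also have "\<dots> = (\<Sum>a\<in>J. \<Sum>k\<in>K. if k = m then (\<Sum>b\<in>J. cnj (v a) * X (a, m) (b, m) * v b) else 0)"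
  proof (intro sum.cong refl)
    fix a k
    show "(\<Sum>b\<in>J. \<Sum>k'\<in>K. cnj (w (a, k)) * X (a, k) (b, k') * w (b, k'))
        = (if k = m then \<Sum>b\<in>J. cnj (v a) * X (a, m) (b, m) * v b else 0)"
    proof (cases "k = m")
      case True
      have "(\<Sum>b\<in>J. \<Sum>k'\<in>K. cnj (w (a, k)) * X (a, k) (b, k') * w (b, k'))
          = (\<Sum>b\<in>J. \<Sum>k'\<in>K. if k' = m then cnj (v a) * X (a, m) (b, m) * v b else 0)"
        using True by (intro sum.cong refl) (auto simp: w_def)
      then show ?thesis using True fin m by simp
    qed (simp add: w_def)
  qed
  also have "\<dots> = (\<Sum>a\<in>J. \<Sum>b\<in>J. cnj (v a) * X (a, m) (b, m) * v b)"
    using fin m by simp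
  finally show ?thesis .
qed

lemma psd_op_ptrace2:
  fixes J :: "'j set" and K :: "'k set"
  assumes psd: "psd_op (J \<times> K) X" and fin: "finite J" "finite K"
  shows "psd_op J (ptrace2 K X)"
  unfolding psd_op_def
proof
  fix v :: "'j \<Rightarrow> complex"
  have "(\<Sum>a\<in>J. \<Sum>b\<in>J. cnj (v a) * ptrace2 K X a b * v b)
      = (\<Sum>a\<in>J. \<Sum>b\<in>J. \<Sum>m\<in>K. cnj (v a) * X (a, m) (b, m) * v b)"
    unfolding ptrace2_def by (simp add: sum_distrib_left sum_distrib_right)
  also have "\<dots> = (\<Sum>m\<in>K. \<Sum>a\<in>J. \<Sum>b\<in>J. cnj (v a) * X (a, m) (b, m) * v b)"
    by (subst sum.swap) (simp add: sum.swap[of _ K])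
  also have "\<dots> = (\<Sum>m\<in>K. op_form (J \<times> K) X (\<lambda>(a, k). if k = m then v a else 0) (\<lambda>(a, k). if k = m then v a else 0))"
    by (intro sum.cong refl) (simp add: op_form_slice fin)
  finally show "(\<Sum>a\<in>J. \<Sum>b\<in>J. cnj (v a) * ptrace2 K X a b * v b) \<in> \<real>
      \<and> 0 \<le> Re (\<Sum>a\<in>J. \<Sum>b\<in>J. cnj (v a) * ptrace2 K X a b * v b)"
    using psd_op_form_real[OF psd] psd_op_form_nonneg[OF psd]
    by (auto intro!: sum_in_Reals sum_nonneg)
qed

section \<open>Real-variable inequalities\<close>

lemma continuous_descent_interval:
  fixes f :: "real \<Rightarrow> real"
  assumes cont: "continuous_on {0..T} f" and T0: "0 \<le> T" and le1: "\<And>t. t \<in> {0..T} \<Longrightarrow> f t \<le> 1"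
    and f0: "f 0 = 1" and fT: "f T \<le> c" and c1: "c < 1"
  obtains t0 t1 where "0 \<le> t0" "t0 < t1" "t1 \<le> T" "f t0 = 1" "f t1 \<le> c"
    "\<And>t. t0 < t \<Longrightarrow> t < t1 \<Longrightarrow> c < f t \<and> f t < 1"
proof -
  define S1 where "S1 = {t \<in> {0..T}. f t \<le> c}"
  have "closed S1" unfolding S1_def
    by (rule continuous_on_closed_Collect_le[OF cont continuous_on_const]) simp
  moreover have "T \<in> S1" "bdd_below S1" unfolding S1_def using T0 fT by auto
  ultimately have "Inf S1 \<in> S1" using closed_contains_Inf by blast
  define t1 where "t1 = Inf S1"
  have t1: "0 \<le> t1" "t1 \<le> T" "f t1 \<le> c"
    using \<open>Inf S1 \<in> S1\<close> unfolding t1_def S1_def by auto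
  have above_c: "c < f t" if "0 \<le> t" "t < t1" for t
  proof (rule ccontr)
    assume "\<not> c < f t"
    then have "t \<in> S1" unfolding S1_def using that t1 by auto
    then have "t1 \<le> t" unfolding t1_def by (rule cInf_lower[OF _ \<open>bdd_below S1\<close>])
    with that show False by simp
  qed
  define S0 where "S0 = {t \<in> {0..t1}. 1 \<le> f t}"
  have "continuous_on {0..t1} f" by (rule continuous_on_subset[OF cont]) (use t1 in auto)
  then have "closed S0" unfolding S0_def
    by (rule continuous_on_closed_Collect_le[OF continuous_on_const]) simp
  moreover have "0 \<in> S0" "bdd_above S0" unfolding S0_def using t1 f0 by auto
  ultimately have "Sup S0 \<in> S0" using closed_contains_Sup by blast
  define t0 where "t0 = Sup S0"
  have t0: "0 \<le> t0" "t0 \<le> t1" "f t0 = 1"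
    using \<open>Sup S0 \<in> S0\<close> le1[of t0] t1 unfolding t0_def S0_def by auto
  have below_1: "f t < 1" if "t0 < t" "t \<le> t1" for t
  proof (rule ccontr)
    assume "\<not> f t < 1"
    then have "t \<in> S0" unfolding S0_def using that t0 by auto
    then have "t \<le> t0" unfolding t0_def by (rule cSup_upper[OF _ \<open>bdd_above S0\<close>])
    with that show False by simp
  qed
  have "t0 < t1" using t0 t1 c1 by (cases "t0 = t1") auto
  then show ?thesis using that[of t0 t1] t0 t1 above_c below_1 by auto
qed

lemma abs_deriv_arccos_sqrt_le:
  fixes y d w :: real
  assumes y: "0 < y" "y < 1" and d: "\<bar>d\<bar> \<le> 2 * w * sqrt y * sqrt (1 - y)"
  shows "\<bar>inverse (- sqrt (1 - (sqrt y)\<^sup>2)) * (inverse (sqrt y) / 2 * d)\<bar> \<le> w"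
proof -
  have pos: "0 < sqrt y * sqrt (1 - y)" using y by simp
  have "\<bar>inverse (- sqrt (1 - (sqrt y)\<^sup>2)) * (inverse (sqrt y) / 2 * d)\<bar> = \<bar>d\<bar> / (2 * (sqrt y * sqrt (1 - y)))"
    using y by (simp add: abs_mult field_simps)
  also have "\<dots> \<le> (2 * w * sqrt y * sqrt (1 - y)) / (2 * (sqrt y * sqrt (1 - y)))"
    using d pos by (intro divide_right_mono) auto
  also have "\<dots> = w" using pos y by simp
  finally show ?thesis .
qed

lemma arccos_sqrt_le_of_deriv_bound:
  fixes f fd :: "real \<Rightarrow> real" and T w c :: real
  assumes T0: "0 \<le> T" and w0: "0 \<le> w"
    and deriv: "\<And>t. t \<in> {0..T} \<Longrightarrow> (f has_real_derivative fd t) (at t within {0..T})"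
    and range: "\<And>t. t \<in> {0..T} \<Longrightarrow> 0 \<le> f t \<and> f t \<le> 1"
    and bound: "\<And>t. t \<in> {0..T} \<Longrightarrow> 0 < f t \<Longrightarrow> f t < 1 \<Longrightarrow> \<bar>fd t\<bar> \<le> 2 * w * sqrt (f t) * sqrt (1 - f t)"
    and f0: "f 0 = 1" and fT: "f T \<le> c" and c0: "0 < c" and c1: "c < 1"
  shows "arccos (sqrt c) \<le> w * T"
proof -
  have cont: "continuous_on {0..T} f"
    unfolding continuous_on_eq_continuous_within using deriv DERIV_continuous by blast
  obtain t0 t1 where t01: "0 \<le> t0" "t0 < t1" "t1 \<le> T" and ft0: "f t0 = 1" and ft1: "f t1 \<le> c"
    and between: "\<And>t. t0 < t \<Longrightarrow> t < t1 \<Longrightarrow> c < f t \<and> f t < 1"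
    using continuous_descent_interval[OF cont T0 _ f0 fT c1] range by blast
  \<comment> \<open>arccos \<circ> sqrt is differentiable only on (0, 1), so the mean value theorem is applied on [t0, t1]\<close>
  define u where "u t = arccos (sqrt (f t))" for t
  define ud where "ud t = inverse (- sqrt (1 - (sqrt (f t))\<^sup>2)) * (inverse (sqrt (f t)) / 2 * fd t)" for t
  have "-1 \<le> sqrt (f t) \<and> sqrt (f t) \<le> 1" if "t \<in> {t0..t1}" for t
    using range[of t] that t01 by (smt (verit) atLeastAtMost_iff real_sqrt_ge_zero real_sqrt_le_1_iff)
  then have u_cont: "continuous_on {t0..t1} u" unfolding u_def
    using t01 by (intro continuous_intros continuous_on_subset[OF cont]) auto
  have u_deriv: "(u has_derivative (*) (ud x)) (at x)" if x: "t0 < x" "x < t1" for x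
  proof -
    have "x \<in> interior {0..T}" using x t01 by auto
    then have "(f has_real_derivative fd x) (at x)"
      using deriv[of x] at_within_interior interior_subset by fastforce
    moreover have "0 < f x" "f x < 1" using between[OF x] c0 by auto
    ultimately have "(u has_real_derivative ud x) (at x)" unfolding u_def ud_def
      by (intro DERIV_chain2[of arccos] DERIV_chain2[of sqrt] DERIV_arccos DERIV_real_sqrt)
        (auto, smt (verit) real_sqrt_gt_zero)
    then show ?thesis by (simp add: has_field_derivative_def)
  qed
  obtain \<xi> where \<xi>: "\<xi> \<in> {t0<..<t1}" and mv: "\<bar>u t1 - u t0\<bar> \<le> \<bar>ud \<xi> * (t1 - t0)\<bar>"
    using mvt_general[OF \<open>t0 < t1\<close> u_cont u_deriv] by auto
  have f\<xi>: "0 < f \<xi>" "f \<xi> < 1" "\<xi> \<in> {0..T}" using between[of \<xi>] \<xi> t01 c0 by auto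
  have ud_le: "\<bar>ud \<xi>\<bar> \<le> w"
    unfolding ud_def by (intro abs_deriv_arccos_sqrt_le bound f\<xi>)
  have "u t1 - u t0 \<le> \<bar>ud \<xi>\<bar> * (t1 - t0)"
    using mv \<open>t0 < t1\<close> abs_ge_self[of "u t1 - u t0"] by (simp add: abs_mult)
  also have "\<dots> \<le> w * (t1 - t0)" using ud_le \<open>t0 < t1\<close> by (intro mult_right_mono) auto
  also have "\<dots> \<le> w * T" using t01 w0 by (intro mult_left_mono) auto
  moreover have "u t0 = 0" unfolding u_def ft0 by simp
  moreover have "arccos (sqrt c) \<le> u t1" unfolding u_def
    using ft1 range[of t1] t01 c1
    by (intro arccos_le_arccos) (auto simp: real_sqrt_le_1_iff, smt (verit) real_sqrt_ge_zero)
  ultimately show ?thesis by simp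
qed

lemma abs_le_of_weighted_am_gm:
  fixes x p q :: real
  assumes p: "0 < p" and q: "0 < q"
    and weighted: "\<And>a b. 0 \<le> a \<Longrightarrow> 0 \<le> b \<Longrightarrow> a * b * \<bar>x\<bar> \<le> a\<^sup>2 * p + b\<^sup>2 * q"
  shows "\<bar>x\<bar> \<le> 2 * sqrt (p * q)"
proof -
  define s where "s = sqrt (p * q)"
  have s: "0 < s" "sqrt q * sqrt p = s" unfolding s_def using p q by (auto simp: real_sqrt_mult)
  have ss: "s * s = p * q" unfolding s_def using p q by (metis real_sqrt_mult_self abs_of_pos mult_pos_pos)
  have "sqrt q * sqrt p * \<bar>x\<bar> \<le> (sqrt q)\<^sup>2 * p + (sqrt p)\<^sup>2 * q"
    by (rule weighted) (use p q in auto)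
  then have "s * \<bar>x\<bar> \<le> q * p + p * q" using p q s by simp
  also have "\<dots> = s * (2 * s)" using ss by algebra
  finally show ?thesis using s unfolding s_def by simp
qed

section \<open>The Grover oracle\<close>

lemma finite_idx [simp]: "finite (idxA N)" "finite (idxM N)" "finite (idxAM N)"
  by (simp_all add: idxA_def idxM_def idxAM_def)

lemma card_idxA [simp]: "card (idxA N) = N"
  by (simp add: idxA_def)

lemma idxA_imp_idxM: "j \<in> idxA N \<Longrightarrow> j \<in> idxM N"
  by (simp add: idxA_def idxM_def)

lemma idxM_eq_insert_0: "idxM N = insert 0 (idxA N)" and zero_notin_idxA: "0 \<notin> idxA N"
  by (auto simp: idxM_def idxA_def)

lemma mem_idxAM: "j \<in> idxA N \<Longrightarrow> m \<in> idxM N \<Longrightarrow> (j, m) \<in> idxAM N"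
  by (simp add: idxAM_def)

lemma psi0_mult_cnj: "0 < N \<Longrightarrow> psi0 N j * cnj (psi0 N j') = complex_of_real (1 / real N)"
  unfolding psi0_def by (simp flip: of_real_mult)

lemma op_mult_groverH_left:
  assumes "j \<in> idxA N" "m \<in> idxM N"
  shows "op_mult (idxAM N) (groverH N) X (j, m) b = (if m = j then complex_of_real pi * X (j, j) b else 0)"
proof -
  have "op_mult (idxAM N) (groverH N) X (j, m) b
      = (\<Sum>c\<in>idxAM N. if c = (j, j) then (if m = j then complex_of_real pi * X (j, j) b else 0) else 0)"
    unfolding op_mult_def by (intro sum.cong refl) (auto simp: groverH_def assms split: prod.splits)
  then show ?thesis using assms by (simp add: idxAM_def idxA_imp_idxM)
qed

lemma op_mult_groverH_right:
  assumes "j' \<in> idxA N" "m \<in> idxM N"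
  shows "op_mult (idxAM N) X (groverH N) a (j', m) = (if m = j' then complex_of_real pi * X a (j', j') else 0)"
proof -
  have "op_mult (idxAM N) X (groverH N) a (j', m)
      = (\<Sum>c\<in>idxAM N. if c = (j', j') then (if m = j' then complex_of_real pi * X a (j', j') else 0) else 0)"
    unfolding op_mult_def by (intro sum.cong refl) (auto simp: groverH_def assms split: prod.splits)
  then show ?thesis using assms by (simp add: idxAM_def idxA_imp_idxM)
qed

lemma ptrace2_groverH_commutator:
  assumes "j \<in> idxA N" "j' \<in> idxA N"
  shows "ptrace2 (idxM N) (\<lambda>a b. op_mult (idxAM N) (groverH N) X a b - op_mult (idxAM N) X (groverH N) a b) j j'
    = complex_of_real pi * (X (j, j) (j', j) - X (j, j') (j', j'))"
proof -
  have "ptrace2 (idxM N) (\<lambda>a b. op_mult (idxAM N) (groverH N) X a b - op_mult (idxAM N) X (groverH N) a b) j j'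
      = (\<Sum>m\<in>idxM N. (if m = j then complex_of_real pi * X (j, j) (j', m) else 0)
          - (if m = j' then complex_of_real pi * X (j, m) (j', j') else 0))"
    unfolding ptrace2_def by (intro sum.cong refl) (simp add: op_mult_groverH_left op_mult_groverH_right assms)
  then show ?thesis using assms by (simp add: sum_subtractf idxA_imp_idxM algebra_simps)
qed

lemma op_trace_groverPi:
  assumes "x \<in> idxA N"
  shows "op_trace (idxAM N) (op_mult (idxAM N) (groverPi N x) Y) = of_nat N * Y (x, x) (x, x)"
proof -
  have xx: "(x, x) \<in> idxAM N" using assms by (simp add: mem_idxAM idxA_imp_idxM)
  have "op_trace (idxAM N) (op_mult (idxAM N) (groverPi N x) Y)
      = (\<Sum>a\<in>idxAM N. \<Sum>c\<in>idxAM N. groverPi N x a c * Y c a)"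
    unfolding op_trace_def op_mult_def ..
  also have "\<dots> = (\<Sum>a\<in>idxAM N. if a = (x, x) then of_nat N * Y (x, x) (x, x) else 0)"
  proof (rule sum.cong[OF refl])
    fix a
    have "(\<Sum>c\<in>idxAM N. groverPi N x a c * Y c a)
        = (\<Sum>c\<in>idxAM N. if c = (x, x) then groverPi N x a (x, x) * Y (x, x) a else 0)"
      by (rule sum.cong[OF refl]) (auto simp: groverPi_def split: prod.splits)
    then show "(\<Sum>c\<in>idxAM N. groverPi N x a c * Y c a) = (if a = (x, x) then of_nat N * Y (x, x) (x, x) else 0)"
      using xx by (auto simp: groverPi_def split: prod.splits)
  qed
  finally show ?thesis using xx by simp
qed

section \<open>The speed of the overlap with psi0\<close>

definition psi0_overlap :: "nat \<Rightarrow> (nat \<Rightarrow> nat \<Rightarrow> complex) \<Rightarrow> real"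
  where "psi0_overlap N R = Re (\<Sum>j\<in>idxA N. \<Sum>j'\<in>idxA N. R j j') / real N"

text \<open>The derivative of the overlap when the purification is X (see ptrace2_groverH_commutator).\<close>
definition overlap_rate :: "nat \<Rightarrow> (nat \<times> nat \<Rightarrow> nat \<times> nat \<Rightarrow> complex) \<Rightarrow> real"
  where "overlap_rate N X = pi / real N * Im (\<Sum>j\<in>idxA N. \<Sum>j'\<in>idxA N. X (j, j) (j', j) - X (j, j') (j', j'))"

definition grover_freq :: "nat \<Rightarrow> real"
  where "grover_freq N = pi * sqrt (real N - 1) / real N"

definition col_vec :: "nat \<Rightarrow> nat \<Rightarrow> nat \<times> nat \<Rightarrow> complex"
  where "col_vec N m = (\<lambda>x. \<Sum>j\<in>idxA N. basis_vec (j, m) x)"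

definition diff_vec :: "nat \<Rightarrow> nat \<Rightarrow> nat \<Rightarrow> nat \<times> nat \<Rightarrow> complex"
  where "diff_vec m j k = (\<lambda>x. basis_vec (j, m) x - basis_vec (k, m) x)"

text \<open>Writing this vector through diff_vec, rather than as \<open>|m,m> - col_vec N m / N\<close>
  (dev_vec_eq), is what lets op_form_dev_vec_le bound its norm.\<close>
definition dev_vec :: "nat \<Rightarrow> nat \<Rightarrow> nat \<times> nat \<Rightarrow> complex"
  where "dev_vec N m = (\<lambda>x. (1 / of_nat N) * (\<Sum>k\<in>idxA N - {m}. diff_vec m m k x))"

lemma dev_vec_eq:
  assumes m: "m \<in> idxA N"
  shows "dev_vec N m x = basis_vec (m, m) x - complex_of_real (1 / real N) * col_vec N m x"
proof -
  have N: "1 \<le> N" using m by (simp add: idxA_def)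
  have "col_vec N m x = basis_vec (m, m) x + (\<Sum>k\<in>idxA N - {m}. basis_vec (k, m) x)"
    unfolding col_vec_def using m by (intro sum.remove) auto
  moreover have "(\<Sum>k\<in>idxA N - {m}. diff_vec m m k x)
      = of_nat (N - 1) * basis_vec (m, m) x - (\<Sum>k\<in>idxA N - {m}. basis_vec (k, m) x)"
    using m by (simp add: diff_vec_def sum_subtractf)
  ultimately show ?thesis using N unfolding dev_vec_def by (simp add: field_simps of_nat_diff)
qed

lemma op_form_col_vec:
  "m \<in> idxM N \<Longrightarrow> op_form (idxAM N) X (col_vec N m) (col_vec N m) = (\<Sum>j\<in>idxA N. \<Sum>j'\<in>idxA N. X (j, m) (j', m))"
  unfolding col_vec_def by (simp add: op_form_sum_left op_form_sum_right op_form_basis_vec mem_idxAM)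

lemma op_form_basis_col_vec:
  "m \<in> idxA N \<Longrightarrow> op_form (idxAM N) X (basis_vec (m, m)) (col_vec N m) = (\<Sum>j\<in>idxA N. X (m, m) (j, m))"
  unfolding col_vec_def by (simp add: op_form_sum_right op_form_basis_vec mem_idxAM idxA_imp_idxM)

lemma op_form_col_vec_basis:
  "m \<in> idxA N \<Longrightarrow> op_form (idxAM N) X (col_vec N m) (basis_vec (m, m)) = (\<Sum>j\<in>idxA N. X (j, m) (m, m))"
  unfolding col_vec_def by (simp add: op_form_sum_left op_form_basis_vec mem_idxAM idxA_imp_idxM)

lemma op_form_dev_vec_cross:
  assumes "m \<in> idxA N"
  shows "op_form (idxAM N) X (dev_vec N m) (\<lambda>x. \<i> * col_vec N m x) + op_form (idxAM N) X (\<lambda>x. \<i> * col_vec N m x) (dev_vec N m)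
    = \<i> * (op_form (idxAM N) X (basis_vec (m, m)) (col_vec N m) - op_form (idxAM N) X (col_vec N m) (basis_vec (m, m)))"
proof -
  have e: "op_form (idxAM N) X (dev_vec N m) w
      = op_form (idxAM N) X (\<lambda>x. basis_vec (m, m) x - complex_of_real (1 / real N) * col_vec N m x) w"
    "op_form (idxAM N) X w (dev_vec N m)
      = op_form (idxAM N) X w (\<lambda>x. basis_vec (m, m) x - complex_of_real (1 / real N) * col_vec N m x)" for w
    by (intro op_form_cong refl; simp add: dev_vec_eq assms)+
  show ?thesis
    unfolding e op_form_diff_left op_form_diff_right op_form_scale_left op_form_scale_right
    by (simp add: algebra_simps)
qed

lemma sum_op_form_basis_col_vec:
  "(\<Sum>m\<in>idxA N. op_form (idxAM N) X (basis_vec (m, m)) (col_vec N m) - op_form (idxAM N) X (col_vec N m) (basis_vec (m, m)))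
    = (\<Sum>j\<in>idxA N. \<Sum>j'\<in>idxA N. X (j, j) (j', j) - X (j, j') (j', j'))"
proof -
  have "(\<Sum>m\<in>idxA N. op_form (idxAM N) X (basis_vec (m, m)) (col_vec N m) - op_form (idxAM N) X (col_vec N m) (basis_vec (m, m)))
      = (\<Sum>m\<in>idxA N. \<Sum>j\<in>idxA N. X (m, m) (j, m)) - (\<Sum>m\<in>idxA N. \<Sum>j\<in>idxA N. X (j, m) (m, m))"
    by (simp add: sum_subtractf op_form_basis_col_vec op_form_col_vec_basis)
  also have "(\<Sum>m\<in>idxA N. \<Sum>j\<in>idxA N. X (j, m) (m, m)) = (\<Sum>j\<in>idxA N. \<Sum>m\<in>idxA N. X (j, m) (m, m))"
    by (rule sum.swap)
  finally show ?thesis by (simp add: sum_subtractf)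
qed

lemma Im_cross_sum_weighted_le:
  fixes a b :: real
  assumes psd: "psd_op (idxAM N) X" and "0 \<le> a" "0 \<le> b"
  shows "a * b * \<bar>Im (\<Sum>j\<in>idxA N. \<Sum>j'\<in>idxA N. X (j, j) (j', j) - X (j, j') (j', j'))\<bar>
    \<le> a\<^sup>2 * (\<Sum>m\<in>idxA N. Re (op_form (idxAM N) X (dev_vec N m) (dev_vec N m)))
      + b\<^sup>2 * (\<Sum>m\<in>idxA N. Re (op_form (idxAM N) X (col_vec N m) (col_vec N m)))"
proof -
  define W where "W = (\<Sum>j\<in>idxA N. \<Sum>j'\<in>idxA N. X (j, j) (j', j) - X (j, j') (j', j'))"
  \<comment> \<open>Im W is the total cross term between the vectors dev_vec N m and i * col_vec N m\<close>
  have cross: "(\<Sum>m\<in>idxA N. Re (op_form (idxAM N) X (dev_vec N m) (\<lambda>x. \<i> * col_vec N m x)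
      + op_form (idxAM N) X (\<lambda>x. \<i> * col_vec N m x) (dev_vec N m))) = - Im W"
  proof -
    have "(\<Sum>m\<in>idxA N. op_form (idxAM N) X (dev_vec N m) (\<lambda>x. \<i> * col_vec N m x)
        + op_form (idxAM N) X (\<lambda>x. \<i> * col_vec N m x) (dev_vec N m)) = \<i> * W"
      unfolding W_def by (simp add: op_form_dev_vec_cross sum_op_form_basis_col_vec flip: sum_distrib_left)
    then show ?thesis by (metis Re_sum Re_i_times)
  qed
  have "a * b' * (- Im W) \<le> a\<^sup>2 * (\<Sum>m\<in>idxA N. Re (op_form (idxAM N) X (dev_vec N m) (dev_vec N m)))
      + b'\<^sup>2 * (\<Sum>m\<in>idxA N. Re (op_form (idxAM N) X (col_vec N m) (col_vec N m)))" for b'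
  proof -
    have "a * b' * (- Im W) = (\<Sum>m\<in>idxA N. a * b' * Re (op_form (idxAM N) X (dev_vec N m) (\<lambda>x. \<i> * col_vec N m x)
        + op_form (idxAM N) X (\<lambda>x. \<i> * col_vec N m x) (dev_vec N m)))"
      by (simp only: cross flip: sum_distrib_left)
    also have "\<dots> \<le> (\<Sum>m\<in>idxA N. a\<^sup>2 * Re (op_form (idxAM N) X (dev_vec N m) (dev_vec N m))
        + b'\<^sup>2 * Re (op_form (idxAM N) X (col_vec N m) (col_vec N m)))"
      by (intro sum_mono order.trans[OF psd_op_cross_le_scaled[OF psd]])
        (simp add: op_form_scale_left op_form_scale_right)
    finally show ?thesis by (simp add: sum.distrib sum_distrib_left)
  qed
  from this[of b] this[of "- b"] show ?thesis
    unfolding W_def[symmetric] using assms(2,3) by (cases "Im W \<ge> 0") auto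
qed

lemma op_form_dev_vec_le:
  assumes psd: "psd_op (idxAM N) X" and m: "m \<in> idxA N"
  shows "Re (op_form (idxAM N) X (dev_vec N m) (dev_vec N m))
    \<le> (real N - 1) / (real N)\<^sup>2 * (\<Sum>k\<in>idxA N. Re (op_form (idxAM N) X (diff_vec m m k) (diff_vec m m k)))"
proof -
  have N: "1 \<le> N" using m by (simp add: idxA_def)
  have "Re (op_form (idxAM N) X (dev_vec N m) (dev_vec N m))
      = 1 / (real N)\<^sup>2 * Re (op_form (idxAM N) X (\<lambda>x. \<Sum>k\<in>idxA N - {m}. diff_vec m m k x) (\<lambda>x. \<Sum>k\<in>idxA N - {m}. diff_vec m m k x))"
    unfolding dev_vec_def op_form_scale_left op_form_scale_right by (simp add: power2_eq_square)
  also have "\<dots> \<le> 1 / (real N)\<^sup>2 * (real (card (idxA N - {m})) * (\<Sum>k\<in>idxA N - {m}. Re (op_form (idxAM N) X (diff_vec m m k) (diff_vec m m k))))"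
    by (intro mult_left_mono psd_op_form_sum_le[OF psd]) auto
  also have "\<dots> \<le> 1 / (real N)\<^sup>2 * ((real N - 1) * (\<Sum>k\<in>idxA N. Re (op_form (idxAM N) X (diff_vec m m k) (diff_vec m m k))))"
  proof -
    have card: "real (card (idxA N - {m})) = real N - 1" using m N by simp
    have sum: "(\<Sum>k\<in>idxA N - {m}. Re (op_form (idxAM N) X (diff_vec m m k) (diff_vec m m k)))
        \<le> (\<Sum>k\<in>idxA N. Re (op_form (idxAM N) X (diff_vec m m k) (diff_vec m m k)))"
      by (intro sum_mono2) (auto simp: psd_op_form_nonneg[OF psd])
    show ?thesis unfolding card by (intro mult_left_mono sum) (use N in auto)
  qed
  finally show ?thesis by simp
qed

lemma sum_op_form_diff_vec_row_le:
  assumes psd: "psd_op (idxAM N) X" and m: "m \<in> idxA N"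
  shows "2 * (\<Sum>k\<in>idxA N. Re (op_form (idxAM N) X (diff_vec m m k) (diff_vec m m k)))
    \<le> (\<Sum>j\<in>idxA N. \<Sum>k\<in>idxA N. Re (op_form (idxAM N) X (diff_vec m j k) (diff_vec m j k)))"
proof -
  define g where "g j k = Re (op_form (idxAM N) X (diff_vec m j k) (diff_vec m j k))" for j k
  have g_nonneg: "0 \<le> g j k" for j k unfolding g_def by (rule psd_op_form_nonneg[OF psd])
  have g_sym: "g j k = g k j" for j k unfolding g_def diff_vec_def by (subst op_form_diff_swap) (rule refl)
  have "g m m = 0" unfolding g_def diff_vec_def by (simp add: op_form_def)
  then have "(\<Sum>k\<in>idxA N. g m k) = (\<Sum>j\<in>idxA N - {m}. g j m)"
    using sum.remove[of "idxA N" m "\<lambda>j. g j m"] m g_sym by simp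
  also have "\<dots> \<le> (\<Sum>j\<in>idxA N - {m}. \<Sum>k\<in>idxA N. g j k)"
    using m by (intro sum_mono member_le_sum) (auto simp: g_nonneg)
  finally have "2 * (\<Sum>k\<in>idxA N. g m k) \<le> (\<Sum>k\<in>idxA N. g m k) + (\<Sum>j\<in>idxA N - {m}. \<Sum>k\<in>idxA N. g j k)"
    by simp
  also have "\<dots> = (\<Sum>j\<in>idxA N. \<Sum>k\<in>idxA N. g j k)"
    using m by (intro sum.remove[symmetric]) auto
  finally show ?thesis unfolding g_def .
qed

context
  fixes N :: nat and X :: "nat \<times> nat \<Rightarrow> nat \<times> nat \<Rightarrow> complex" and R :: "nat \<Rightarrow> nat \<Rightarrow> complex"
  assumes N_gt_1: "N > 1" and psd_X: "psd_op (idxAM N) X"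
    and ptrace2_X: "\<And>j j'. j \<in> idxA N \<Longrightarrow> j' \<in> idxA N \<Longrightarrow> ptrace2 (idxM N) X j j' = R j j'"
    and diag_R: "\<And>j. j \<in> idxA N \<Longrightarrow> R j j = 1 / of_nat N"
begin

lemma sum_op_form_col_vec:
  "(\<Sum>m\<in>idxM N. op_form (idxAM N) X (col_vec N m) (col_vec N m)) = (\<Sum>j\<in>idxA N. \<Sum>j'\<in>idxA N. R j j')"
proof -
  have "(\<Sum>m\<in>idxM N. op_form (idxAM N) X (col_vec N m) (col_vec N m))
      = (\<Sum>m\<in>idxM N. \<Sum>j\<in>idxA N. \<Sum>j'\<in>idxA N. X (j, m) (j', m))"
    by (intro sum.cong refl) (simp add: op_form_col_vec)
  also have "\<dots> = (\<Sum>j\<in>idxA N. \<Sum>j'\<in>idxA N. \<Sum>m\<in>idxM N. X (j, m) (j', m))"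
    by (subst sum.swap) (simp add: sum.swap[of _ "idxM N"])
  also have "\<dots> = (\<Sum>j\<in>idxA N. \<Sum>j'\<in>idxA N. R j j')"
    by (intro sum.cong refl) (simp add: ptrace2_X[symmetric] ptrace2_def)
  finally show ?thesis .
qed

lemma sum_op_form_diff_vec:
  "(\<Sum>m\<in>idxM N. \<Sum>j\<in>idxA N. \<Sum>k\<in>idxA N. op_form (idxAM N) X (diff_vec m j k) (diff_vec m j k))
    = 2 * of_nat N - 2 * (\<Sum>j\<in>idxA N. \<Sum>j'\<in>idxA N. R j j')"
proof -
  have "(\<Sum>m\<in>idxM N. \<Sum>j\<in>idxA N. \<Sum>k\<in>idxA N. op_form (idxAM N) X (diff_vec m j k) (diff_vec m j k))
      = (\<Sum>m\<in>idxM N. \<Sum>j\<in>idxA N. \<Sum>k\<in>idxA N. X (j, m) (j, m) - X (j, m) (k, m) - X (k, m) (j, m) + X (k, m) (k, m))"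
    unfolding diff_vec_def by (intro sum.cong refl) (simp add: op_form_basis_vec_diff mem_idxAM)
  also have "\<dots> = (\<Sum>j\<in>idxA N. \<Sum>k\<in>idxA N. \<Sum>m\<in>idxM N. X (j, m) (j, m) - X (j, m) (k, m) - X (k, m) (j, m) + X (k, m) (k, m))"
    by (subst sum.swap) (simp add: sum.swap[of _ "idxM N"])
  also have "\<dots> = (\<Sum>j\<in>idxA N. \<Sum>k\<in>idxA N. R j j - R j k - R k j + R k k)"
    by (intro sum.cong refl) (simp add: ptrace2_X[symmetric] ptrace2_def sum.distrib sum_subtractf)
  also have "\<dots> = (\<Sum>j\<in>idxA N. \<Sum>k\<in>idxA N. 2 / of_nat N - R j k - R k j)"
    by (intro sum.cong refl) (simp add: diag_R)
  also have "\<dots> = 2 * of_nat N - (\<Sum>j\<in>idxA N. \<Sum>k\<in>idxA N. R j k) - (\<Sum>j\<in>idxA N. \<Sum>k\<in>idxA N. R k j)"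
    using N_gt_1 by (simp add: sum_subtractf)
  also have "(\<Sum>j\<in>idxA N. \<Sum>k\<in>idxA N. R k j) = (\<Sum>j\<in>idxA N. \<Sum>k\<in>idxA N. R j k)"
    by (rule sum.swap)
  finally show ?thesis by simp
qed

lemma psi0_overlap_nonneg: "0 \<le> psi0_overlap N R"
proof -
  have "0 \<le> (\<Sum>m\<in>idxM N. Re (op_form (idxAM N) X (col_vec N m) (col_vec N m)))"
    by (intro sum_nonneg psd_op_form_nonneg[OF psd_X])
  also have "\<dots> = Re (\<Sum>j\<in>idxA N. \<Sum>j'\<in>idxA N. R j j')" by (simp flip: sum_op_form_col_vec)
  finally show ?thesis unfolding psi0_overlap_def by simp
qed

lemma psi0_overlap_le_1: "psi0_overlap N R \<le> 1"
proof -
  have "0 \<le> Re (\<Sum>m\<in>idxM N. \<Sum>j\<in>idxA N. \<Sum>k\<in>idxA N. op_form (idxAM N) X (diff_vec m j k) (diff_vec m j k))"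
    unfolding Re_sum by (intro sum_nonneg psd_op_form_nonneg[OF psd_X])
  then show ?thesis using N_gt_1 unfolding sum_op_form_diff_vec psi0_overlap_def by simp
qed

lemma sum_op_form_col_vec_le:
  "(\<Sum>m\<in>idxA N. Re (op_form (idxAM N) X (col_vec N m) (col_vec N m))) \<le> real N * psi0_overlap N R"
proof -
  have "(\<Sum>m\<in>idxA N. Re (op_form (idxAM N) X (col_vec N m) (col_vec N m)))
      \<le> (\<Sum>m\<in>idxM N. Re (op_form (idxAM N) X (col_vec N m) (col_vec N m)))"
    by (intro sum_mono2) (auto simp: idxA_imp_idxM psd_op_form_nonneg[OF psd_X])
  also have "\<dots> = real N * psi0_overlap N R"
    using N_gt_1 by (simp add: psi0_overlap_def flip: sum_op_form_col_vec)
  finally show ?thesis .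
qed

lemma sum_op_form_dev_vec_le:
  "(\<Sum>m\<in>idxA N. Re (op_form (idxAM N) X (dev_vec N m) (dev_vec N m)))
    \<le> (real N - 1) / real N * (1 - psi0_overlap N R)"
proof -
  define G where "G m = (\<Sum>j\<in>idxA N. \<Sum>k\<in>idxA N. Re (op_form (idxAM N) X (diff_vec m j k) (diff_vec m j k)))" for m
  have "(\<Sum>m\<in>idxA N. Re (op_form (idxAM N) X (dev_vec N m) (dev_vec N m)))
      \<le> (\<Sum>m\<in>idxA N. (real N - 1) / (real N)\<^sup>2 / 2 * G m)"
  proof (intro sum_mono order.trans[OF op_form_dev_vec_le[OF psd_X]])
    fix m assume "m \<in> idxA N"
    then have "(real N - 1) / (real N)\<^sup>2 / 2 * (2 * (\<Sum>k\<in>idxA N. Re (op_form (idxAM N) X (diff_vec m m k) (diff_vec m m k))))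
        \<le> (real N - 1) / (real N)\<^sup>2 / 2 * G m"
      using sum_op_form_diff_vec_row_le[OF psd_X] N_gt_1 unfolding G_def by (intro mult_left_mono) auto
    then show "(real N - 1) / (real N)\<^sup>2 * (\<Sum>k\<in>idxA N. Re (op_form (idxAM N) X (diff_vec m m k) (diff_vec m m k)))
        \<le> (real N - 1) / (real N)\<^sup>2 / 2 * G m"
      by simp
  qed
  also have "\<dots> \<le> (real N - 1) / (real N)\<^sup>2 / 2 * (\<Sum>m\<in>idxM N. G m)"
    unfolding sum_distrib_left[symmetric] using N_gt_1
    by (intro mult_left_mono sum_mono2) (auto simp: idxA_imp_idxM G_def intro!: sum_nonneg psd_op_form_nonneg[OF psd_X])
  also have "(\<Sum>m\<in>idxM N. G m) = 2 * real N - 2 * Re (\<Sum>j\<in>idxA N. \<Sum>j'\<in>idxA N. R j j')"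
    using arg_cong[OF sum_op_form_diff_vec, of Re] unfolding G_def by simp
  also have "(real N - 1) / (real N)\<^sup>2 / 2 * (2 * real N - 2 * Re (\<Sum>j\<in>idxA N. \<Sum>j'\<in>idxA N. R j j'))
      = (real N - 1) / real N * (1 - psi0_overlap N R)"
    using N_gt_1 by (simp add: psi0_overlap_def field_simps power2_eq_square)
  finally show ?thesis .
qed

lemma abs_overlap_rate_le:
  assumes "0 < psi0_overlap N R" "psi0_overlap N R < 1"
  shows "\<bar>overlap_rate N X\<bar> \<le> 2 * grover_freq N * sqrt (psi0_overlap N R) * sqrt (1 - psi0_overlap N R)"
proof -
  define f where "f = psi0_overlap N R"
  define W where "W = (\<Sum>j\<in>idxA N. \<Sum>j'\<in>idxA N. X (j, j) (j', j) - X (j, j') (j', j'))"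
  have "\<bar>Im W\<bar> \<le> 2 * sqrt ((real N - 1) / real N * (1 - f) * (real N * f))"
  proof (rule abs_le_of_weighted_am_gm)
    fix a b :: real assume "0 \<le> a" "0 \<le> b"
    then have "a * b * \<bar>Im W\<bar> \<le> a\<^sup>2 * (\<Sum>m\<in>idxA N. Re (op_form (idxAM N) X (dev_vec N m) (dev_vec N m)))
        + b\<^sup>2 * (\<Sum>m\<in>idxA N. Re (op_form (idxAM N) X (col_vec N m) (col_vec N m)))"
      unfolding W_def by (rule Im_cross_sum_weighted_le[OF psd_X])
    also have "\<dots> \<le> a\<^sup>2 * ((real N - 1) / real N * (1 - f)) + b\<^sup>2 * (real N * f)"
      unfolding f_def by (intro add_mono mult_left_mono sum_op_form_dev_vec_le sum_op_form_col_vec_le) auto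
    finally show "a * b * \<bar>Im W\<bar> \<le> a\<^sup>2 * ((real N - 1) / real N * (1 - f)) + b\<^sup>2 * (real N * f)" .
  qed (use assms N_gt_1 in \<open>auto simp: f_def\<close>)
  also have "sqrt ((real N - 1) / real N * (1 - f) * (real N * f)) = sqrt (real N - 1) * sqrt f * sqrt (1 - f)"
    using N_gt_1 by (simp add: real_sqrt_mult)
  finally have "\<bar>Im W\<bar> \<le> 2 * (sqrt (real N - 1) * sqrt f * sqrt (1 - f))" .
  then show ?thesis
    unfolding overlap_rate_def grover_freq_def W_def[symmetric] f_def[symmetric]
    using N_gt_1 by (simp add: abs_mult field_simps)
qed

lemma sum_diag_weight_row:
  assumes "j \<in> idxA N"
  shows "(\<Sum>m\<in>idxM N. Re (X (j, m) (j, m))) = 1 / real N"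
  using ptrace2_X[OF assms assms] diag_R[OF assms] unfolding ptrace2_def
  by (metis Re_complex_of_real Re_sum of_real_1 of_real_divide of_real_of_nat_eq)

lemma diag_weight_off_zero_if_certain_success:
  assumes success: "\<And>x. x \<in> idxA N \<Longrightarrow> 1 \<le> Re (of_nat N * X (x, x) (x, x))"
    and j: "j \<in> idxA N" and m: "m \<in> idxM N" "m \<noteq> j"
  shows "Re (X (j, m) (j, m)) = 0"
proof -
  have nonneg: "\<forall>k\<in>idxM N - {j}. 0 \<le> Re (X (j, k) (j, k))"
    using psd_op_diag_nonneg[OF finite_idx(3) psd_X] j by (auto intro: mem_idxAM)
  have "1 / real N \<le> Re (X (j, j) (j, j))"
    using success[OF j] N_gt_1 by (simp add: field_simps)
  moreover have "(\<Sum>k\<in>idxM N. Re (X (j, k) (j, k))) = Re (X (j, j) (j, j)) + (\<Sum>k\<in>idxM N - {j}. Re (X (j, k) (j, k)))"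
    using j by (intro sum.remove) (auto simp: idxA_imp_idxM)
  ultimately have "(\<Sum>k\<in>idxM N - {j}. Re (X (j, k) (j, k))) \<le> 0"
    using sum_diag_weight_row[OF j] by linarith
  moreover have "0 \<le> (\<Sum>k\<in>idxM N - {j}. Re (X (j, k) (j, k)))"
    using nonneg by (intro sum_nonneg) blast
  ultimately have "(\<Sum>k\<in>idxM N - {j}. Re (X (j, k) (j, k))) = 0" by linarith
  then have "\<forall>k\<in>idxM N - {j}. Re (X (j, k) (j, k)) = 0"
    using nonneg by (subst (asm) sum_nonneg_eq_0_iff) auto
  then show ?thesis using m by blast
qed

lemma op_form_col_vec_if_certain_success:
  assumes success: "\<And>x. x \<in> idxA N \<Longrightarrow> 1 \<le> Re (of_nat N * X (x, x) (x, x))" and m: "m \<in> idxM N"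
  shows "Re (op_form (idxAM N) X (col_vec N m) (col_vec N m)) = (if m \<in> idxA N then Re (X (m, m) (m, m)) else 0)"
proof -
  have null: "Re (op_form (idxAM N) X (basis_vec (j, m)) (basis_vec (j, m))) = 0"
    if "j \<in> idxA N" "m \<noteq> j" for j
    using diag_weight_off_zero_if_certain_success[OF success that(1) m that(2)]
    by (simp add: op_form_basis_vec mem_idxAM that m)
  show ?thesis
  proof (cases "m \<in> idxA N")
    case True
    have "op_form (idxAM N) X (col_vec N m) (col_vec N m)
        = op_form (idxAM N) X (\<lambda>x. basis_vec (m, m) x + (\<Sum>j\<in>idxA N - {m}. basis_vec (j, m) x))
            (\<lambda>x. basis_vec (m, m) x + (\<Sum>j\<in>idxA N - {m}. basis_vec (j, m) x))"
      unfolding col_vec_def using True by (intro op_form_cong; intro sum.remove) auto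
    also have "Re \<dots> = Re (op_form (idxAM N) X (basis_vec (m, m)) (basis_vec (m, m)))"
      by (intro psd_op_form_add_null[OF psd_X] psd_op_form_sum_null[OF psd_X]) (use null in auto)
    finally show ?thesis using True m by (simp add: op_form_basis_vec mem_idxAM)
  next
    case False
    have "Re (op_form (idxAM N) X (col_vec N m) (col_vec N m)) = 0"
      unfolding col_vec_def by (intro psd_op_form_sum_null[OF psd_X]) (use null False in auto)
    then show ?thesis using False by simp
  qed
qed

lemma psi0_overlap_le_if_certain_success:
  assumes success: "\<And>x. x \<in> idxA N \<Longrightarrow> 1 \<le> Re (of_nat N * X (x, x) (x, x))"
  shows "psi0_overlap N R \<le> 1 / real N"
proof -
  have "real N * psi0_overlap N R = (\<Sum>m\<in>idxM N. Re (op_form (idxAM N) X (col_vec N m) (col_vec N m)))"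
    using N_gt_1 by (simp add: psi0_overlap_def flip: sum_op_form_col_vec)
  also have "\<dots> = (\<Sum>m\<in>idxM N. if m \<in> idxA N then Re (X (m, m) (m, m)) else 0)"
    by (intro sum.cong refl) (rule op_form_col_vec_if_certain_success[OF success])
  also have "\<dots> = (\<Sum>m\<in>idxA N. Re (X (m, m) (m, m)))"
    by (simp add: sum.inter_restrict[symmetric] Int_absorb1 idxA_imp_idxM subsetI)
  also have "\<dots> \<le> (\<Sum>m\<in>idxA N. 1 / real N)"
  proof (intro sum_mono)
    fix m assume m: "m \<in> idxA N"
    have "Re (X (m, m) (m, m)) \<le> (\<Sum>k\<in>idxM N. Re (X (m, k) (m, k)))"
      by (rule member_le_sum)
        (use m in \<open>auto simp: idxA_imp_idxM intro!: psd_op_diag_nonneg[OF finite_idx(3) psd_X] mem_idxAM\<close>)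
    then show "Re (X (m, m) (m, m)) \<le> 1 / real N" by (simp add: sum_diag_weight_row m)
  qed
  finally show ?thesis using N_gt_1 by (simp add: field_simps)
qed

end

section \<open>Lower bound on the query time\<close>

lemma grover_protocol_deriv:
  assumes "grover_protocol N T p \<rho> \<rho>t \<rho>'" "t \<in> {0..T}" "j \<in> idxA N" "j' \<in> idxA N"
  shows "((\<lambda>s. \<rho> s j j') has_vector_derivative
      - \<i> * (complex_of_real pi * (\<rho>t t (j, j) (j', j) - \<rho>t t (j, j') (j', j')))) (at t within {0..T})"
  using assms unfolding grover_protocol_def by (simp add: ptrace2_groverH_commutator)

lemma grover_protocol_diag:
  assumes P: "grover_protocol N T p \<rho> \<rho>t \<rho>'" and N: "0 < N" and t: "t \<in> {0..T}" and j: "j \<in> idxA N"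
  shows "\<rho> t j j = 1 / of_nat N"
proof -
  have "\<exists>c. \<forall>s\<in>{0..T}. \<rho> s j j = c"
  proof (rule has_derivative_zero_constant)
    fix s assume "s \<in> {0..T}"
    from grover_protocol_deriv[OF P this j j]
    show "((\<lambda>s. \<rho> s j j) has_derivative (\<lambda>h. 0)) (at s within {0..T})"
      by (simp add: has_vector_derivative_def)
  qed simp
  then have "\<rho> t j j = \<rho> 0 j j" using t by (metis atLeastAtMost_iff order.trans order_refl)
  also have "\<dots> = psi0 N j * cnj (psi0 N j)" using P j unfolding grover_protocol_def by blast
  finally show ?thesis using N by (simp add: psi0_mult_cnj)
qed

lemma grover_protocol_overlap_deriv:
  assumes P: "grover_protocol N T p \<rho> \<rho>t \<rho>'" and t: "t \<in> {0..T}"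
  shows "((\<lambda>s. psi0_overlap N (\<rho> s)) has_real_derivative overlap_rate N (\<rho>t t)) (at t within {0..T})"
proof -
  define W where "W = (\<Sum>j\<in>idxA N. \<Sum>j'\<in>idxA N. \<rho>t t (j, j) (j', j) - \<rho>t t (j, j') (j', j'))"
  have "(\<Sum>j\<in>idxA N. \<Sum>j'\<in>idxA N. - \<i> * (complex_of_real pi * (\<rho>t t (j, j) (j', j) - \<rho>t t (j, j') (j', j'))))
      = - \<i> * complex_of_real pi * W"
    unfolding W_def by (simp add: sum_distrib_left mult.assoc)
  moreover have "((\<lambda>s. \<Sum>j\<in>idxA N. \<Sum>j'\<in>idxA N. \<rho> s j j') has_vector_derivative
      (\<Sum>j\<in>idxA N. \<Sum>j'\<in>idxA N. - \<i> * (complex_of_real pi * (\<rho>t t (j, j) (j', j) - \<rho>t t (j, j') (j', j')))))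
      (at t within {0..T})"
    by (intro has_vector_derivative_sum grover_protocol_deriv[OF P t])
  ultimately have "((\<lambda>s. Re (\<Sum>j\<in>idxA N. \<Sum>j'\<in>idxA N. \<rho> s j j') / real N) has_real_derivative
      Re (- \<i> * complex_of_real pi * W) / real N) (at t within {0..T})"
    by (intro DERIV_cdivide has_field_derivative_Re) simp
  then show ?thesis unfolding psi0_overlap_def overlap_rate_def W_def[symmetric] by simp
qed

lemma grover_protocol_time_lower_bound:
  assumes N: "N > 1" and P: "grover_protocol N T 1 \<rho> \<rho>t \<rho>'"
  shows "arccos (1 / sqrt (real N)) \<le> grover_freq N * T"
proof -
  have T: "0 \<le> T" and psd: "\<And>t. t \<in> {0..T} \<Longrightarrow> psd_op (idxAM N) (\<rho>t t)" and psd': "psd_op (idxAM N) \<rho>'"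
    and init: "\<And>j j'. j \<in> idxA N \<Longrightarrow> j' \<in> idxA N \<Longrightarrow> \<rho> 0 j j' = psi0 N j * cnj (psi0 N j')"
    and ptrace: "\<And>t j j'. t \<in> {0..T} \<Longrightarrow> j \<in> idxA N \<Longrightarrow> j' \<in> idxA N \<Longrightarrow> ptrace2 (idxM N) (\<rho>t t) j j' = \<rho> t j j'"
    and final: "\<And>j j'. j \<in> idxA N \<Longrightarrow> j' \<in> idxA N \<Longrightarrow> ptrace2 (idxM N) \<rho>' j j' = \<rho> T j j'"
    and success: "\<And>x. x \<in> idxA N \<Longrightarrow> 1 \<le> Re (op_trace (idxAM N) (op_mult (idxAM N) (groverPi N x) \<rho>'))"
    using P unfolding grover_protocol_def by blast+
  have diag: "\<And>t j. t \<in> {0..T} \<Longrightarrow> j \<in> idxA N \<Longrightarrow> \<rho> t j j = 1 / of_nat N"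
    using grover_protocol_diag[OF P] N by simp
  have overlap_range: "0 \<le> psi0_overlap N (\<rho> t) \<and> psi0_overlap N (\<rho> t) \<le> 1" if "t \<in> {0..T}" for t
    using psi0_overlap_nonneg[OF N psd ptrace diag] psi0_overlap_le_1[OF N psd ptrace diag] that by simp
  have start: "psi0_overlap N (\<rho> 0) = 1"
  proof -
    have "(\<Sum>j\<in>idxA N. \<Sum>j'\<in>idxA N. \<rho> 0 j j') = (\<Sum>j\<in>idxA N. \<Sum>j'\<in>idxA N. complex_of_real (1 / real N))"
      using init N by (intro sum.cong refl) (simp add: psi0_mult_cnj)
    then show ?thesis unfolding psi0_overlap_def using N by simp
  qed
  have "psi0_overlap N (\<rho> T) \<le> 1 / real N"
    by (rule psi0_overlap_le_if_certain_success[OF N psd' final])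
      (use diag T success op_trace_groverPi in auto)
  then have "arccos (sqrt (1 / real N)) \<le> grover_freq N * T"
    by (intro arccos_sqrt_le_of_deriv_bound[OF T _ grover_protocol_overlap_deriv[OF P] overlap_range
          abs_overlap_rate_le[OF N psd ptrace diag] start]) (use N in \<open>auto simp: grover_freq_def\<close>)
  then show ?thesis by (simp add: real_sqrt_divide)
qed

definition grover_time :: "nat \<Rightarrow> real"
  where "grover_time N = 1 / pi * real N / sqrt (real N - 1) * arccos (1 / sqrt (real N))"

lemma grover_freq_pos: "N > 1 \<Longrightarrow> 0 < grover_freq N"
  by (simp add: grover_freq_def)

lemma grover_freq_mult_time: "N > 1 \<Longrightarrow> grover_freq N * grover_time N = arccos (1 / sqrt (real N))"
  unfolding grover_freq_def grover_time_def by (simp add: field_simps)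

lemma grover_time_le:
  assumes "N > 1" "grover_protocol N T 1 \<rho> \<rho>t \<rho>'"
  shows "grover_time N \<le> T"
  using grover_protocol_time_lower_bound[OF assms] grover_freq_mult_time[OF assms(1)] grover_freq_pos[OF assms(1)]
  by (metis mult_le_cancel_left_pos)

section \<open>An optimal protocol\<close>

definition amp_diag :: "nat \<Rightarrow> real \<Rightarrow> complex"
  where "amp_diag N t = complex_of_real (cos (grover_freq N * t)) - \<i> * complex_of_real (sin (grover_freq N * t) * sqrt (real N - 1))"

definition amp_off :: "nat \<Rightarrow> real \<Rightarrow> complex"
  where "amp_off N t = complex_of_real (cos (grover_freq N * t)) + \<i> * complex_of_real (sin (grover_freq N * t) / sqrt (real N - 1))"

definition grover_amp :: "nat \<Rightarrow> real \<Rightarrow> nat \<times> nat \<Rightarrow> complex"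
  where "grover_amp N t a = (if snd a = 0 then 0 else if fst a = snd a then amp_diag N t else amp_off N t) / of_nat N"

definition grover_purif :: "nat \<Rightarrow> real \<Rightarrow> nat \<times> nat \<Rightarrow> nat \<times> nat \<Rightarrow> complex"
  where "grover_purif N t = (\<lambda>a b. grover_amp N t a * cnj (grover_amp N t b))"

definition coherence :: "nat \<Rightarrow> real \<Rightarrow> real"
  where "coherence N t = (cos (grover_freq N * t))\<^sup>2 - (sin (grover_freq N * t))\<^sup>2 / (real N - 1)"

definition grover_rho :: "nat \<Rightarrow> real \<Rightarrow> nat \<Rightarrow> nat \<Rightarrow> complex"
  where "grover_rho N t j j' = (if j = j' then complex_of_real (1 / real N) else complex_of_real (coherence N t / real N))"

definition grover_final :: "nat \<Rightarrow> nat \<times> nat \<Rightarrow> nat \<times> nat \<Rightarrow> complex"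
  where "grover_final N a b = (if a = b then complex_of_real (if fst a = snd a then 1 / real N else 0) else 0)"

lemma coherence_grover_time:
  assumes N: "N > 1"
  shows "coherence N (grover_time N) = 0"
proof -
  have "cos (grover_freq N * grover_time N) = 1 / sqrt (real N)"
    unfolding grover_freq_mult_time[OF N] using N by (intro cos_arccos) (auto simp: order.trans[of _ 0])
  then have "(cos (grover_freq N * grover_time N))\<^sup>2 = 1 / real N" using N by (simp add: power_divide)
  moreover from this have "(sin (grover_freq N * grover_time N))\<^sup>2 = 1 - 1 / real N"
    using sin_cos_squared_add[of "grover_freq N * grover_time N"] by linarith
  ultimately show ?thesis unfolding coherence_def using N by (simp add: field_simps)
qed

lemma amp_products:
  fixes N :: nat and t :: real
  defines "c \<equiv> cos (grover_freq N * t)" and "s \<equiv> sin (grover_freq N * t)" and "q \<equiv> sqrt (real N - 1)"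
  assumes "N > 1"
  shows "amp_diag N t * cnj (amp_diag N t) = complex_of_real (c\<^sup>2 + s\<^sup>2 * q\<^sup>2)"
    and "amp_off N t * cnj (amp_off N t) = complex_of_real (c\<^sup>2 + s\<^sup>2 / q\<^sup>2)"
    and "amp_diag N t * cnj (amp_off N t) + amp_off N t * cnj (amp_diag N t) = complex_of_real (2 * (c\<^sup>2 - s\<^sup>2))"
    and "amp_diag N t * cnj (amp_off N t) - amp_off N t * cnj (amp_diag N t)
      = \<i> * complex_of_real (- 2 * c * s * (q + 1 / q))"
proof -
  have "q > 0" unfolding q_def using assms by simp
  then show "amp_diag N t * cnj (amp_diag N t) = complex_of_real (c\<^sup>2 + s\<^sup>2 * q\<^sup>2)"
    and "amp_off N t * cnj (amp_off N t) = complex_of_real (c\<^sup>2 + s\<^sup>2 / q\<^sup>2)"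
    and "amp_diag N t * cnj (amp_off N t) + amp_off N t * cnj (amp_diag N t) = complex_of_real (2 * (c\<^sup>2 - s\<^sup>2))"
    and "amp_diag N t * cnj (amp_off N t) - amp_off N t * cnj (amp_diag N t)
      = \<i> * complex_of_real (- 2 * c * s * (q + 1 / q))"
    unfolding amp_diag_def amp_off_def c_def[symmetric] s_def[symmetric] q_def[symmetric]
    by (simp_all add: complex_eq_iff power2_eq_square field_simps)
qed

lemma marginal_diag_identity:
  fixes q c s n :: real
  assumes "q > 0" "c\<^sup>2 + s\<^sup>2 = 1" "n = q\<^sup>2 + 1"
  shows "(c\<^sup>2 + s\<^sup>2 * q\<^sup>2 + (n - 1) * (c\<^sup>2 + s\<^sup>2 / q\<^sup>2)) / n\<^sup>2 = 1 / n"
proof -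
  have "c\<^sup>2 + s\<^sup>2 * q\<^sup>2 + (n - 1) * (c\<^sup>2 + s\<^sup>2 / q\<^sup>2) = n * (c\<^sup>2 + s\<^sup>2)"
    using assms(1) unfolding assms(3) by (simp add: field_simps power2_eq_square)
  then show ?thesis using assms by (simp add: power2_eq_square)
qed

lemma marginal_offdiag_identity:
  fixes q c s n :: real
  assumes "q > 0" "n = q\<^sup>2 + 1"
  shows "(2 * (c\<^sup>2 - s\<^sup>2) + (n - 2) * (c\<^sup>2 + s\<^sup>2 / q\<^sup>2)) / n\<^sup>2 = (c\<^sup>2 - s\<^sup>2 / (n - 1)) / n"
proof -
  have "2 * (c\<^sup>2 - s\<^sup>2) + (n - 2) * (c\<^sup>2 + s\<^sup>2 / q\<^sup>2) = n * (c\<^sup>2 - s\<^sup>2 / (n - 1))"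
    using assms(1) unfolding assms(2) by (simp add: field_simps power2_eq_square)
  moreover have "n > 0" using assms by (simp add: add_pos_nonneg)
  ultimately show ?thesis by (simp add: power2_eq_square)
qed

lemma coherence_rate_identity:
  fixes q c s n :: real
  assumes q: "q > 0" and n: "n = q\<^sup>2 + 1"
  shows "pi * (- 2 * c * s * (q + 1 / q) / n\<^sup>2)
    = (2 * c * (- s * (pi * q / n)) - 2 * s * (c * (pi * q / n)) / (n - 1)) / n"
proof -
  have n0: "n > 0" using n zero_le_power2[of q] by linarith
  have "q + 1 / q = n / q" using q n by (simp add: field_simps power2_eq_square)
  then have lhs: "pi * (- 2 * c * s * (q + 1 / q) / n\<^sup>2) = - 2 * pi * c * s / (q * n)"
    using n0 q by (simp add: field_simps power2_eq_square)
  have n1: "n - 1 = q\<^sup>2" using n by simp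
  have rhs: "(2 * c * (- s * (pi * q / n)) - 2 * s * (c * (pi * q / n)) / (n - 1)) / n
      = - 2 * pi * c * s * (q\<^sup>2 + 1) / (q * n * n)"
    unfolding n1 using n0 q by (simp add: field_simps power2_eq_square)
  show ?thesis unfolding lhs rhs n[symmetric] using n0 q by (simp add: field_simps)
qed

lemma ptrace2_grover_purif_eq_sum:
  "ptrace2 (idxM N) (grover_purif N t) j j' = (\<Sum>m\<in>idxA N. (if j = m then amp_diag N t else amp_off N t)
    * cnj (if j' = m then amp_diag N t else amp_off N t) / (of_nat N)\<^sup>2)"
proof -
  have "ptrace2 (idxM N) (grover_purif N t) j j' = (\<Sum>m\<in>idxA N. grover_amp N t (j, m) * cnj (grover_amp N t (j', m)))"
    unfolding ptrace2_def grover_purif_def idxM_eq_insert_0 using zero_notin_idxA by (simp add: grover_amp_def)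
  also have "\<dots> = (\<Sum>m\<in>idxA N. (if j = m then amp_diag N t else amp_off N t)
      * cnj (if j' = m then amp_diag N t else amp_off N t) / (of_nat N)\<^sup>2)"
    by (rule sum.cong[OF refl]) (auto simp: grover_amp_def zero_notin_idxA power2_eq_square)
  finally show ?thesis .
qed

lemma ptrace2_grover_purif:
  assumes N: "N > 1" and j: "j \<in> idxA N" and j': "j' \<in> idxA N"
  shows "ptrace2 (idxM N) (grover_purif N t) j j' = grover_rho N t j j'"
proof -
  define c where "c = cos (grover_freq N * t)"
  define s where "s = sin (grover_freq N * t)"
  define q where "q = sqrt (real N - 1)"
  have q: "q > 0" "q\<^sup>2 = real N - 1" unfolding q_def using N by auto
  note products = amp_products[OF N, of t, folded c_def s_def q_def]
  define h where "h m = (if j = m then amp_diag N t else amp_off N t)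
    * cnj (if j' = m then amp_diag N t else amp_off N t) / (of_nat N)\<^sup>2" for m
  have split_j: "(\<Sum>m\<in>idxA N. h m) = h j + (\<Sum>m\<in>idxA N - {j}. h m)" using j by (intro sum.remove) auto
  show ?thesis
  proof (cases "j = j'")
    case True
    have "(\<Sum>m\<in>idxA N - {j}. h m) = of_nat (N - 1) * (amp_off N t * cnj (amp_off N t) / (of_nat N)\<^sup>2)"
      using True j by (simp add: h_def)
    then have "(\<Sum>m\<in>idxA N. h m)
        = (amp_diag N t * cnj (amp_diag N t) + of_nat (N - 1) * (amp_off N t * cnj (amp_off N t))) / (of_nat N)\<^sup>2"
      using True split_j by (simp add: h_def add_divide_distrib)
    also have "\<dots> = complex_of_real ((c\<^sup>2 + s\<^sup>2 * q\<^sup>2 + (real N - 1) * (c\<^sup>2 + s\<^sup>2 / q\<^sup>2)) / (real N)\<^sup>2)"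
      unfolding products using N by (simp add: of_nat_diff)
    also have "(c\<^sup>2 + s\<^sup>2 * q\<^sup>2 + (real N - 1) * (c\<^sup>2 + s\<^sup>2 / q\<^sup>2)) / (real N)\<^sup>2 = 1 / real N"
      by (rule marginal_diag_identity[OF q(1)]) (use q(2) in \<open>simp_all add: c_def s_def\<close>)
    finally show ?thesis using True by (simp add: ptrace2_grover_purif_eq_sum h_def grover_rho_def)
  next
    case False
    have "(\<Sum>m\<in>idxA N - {j}. h m) = h j' + (\<Sum>m\<in>idxA N - {j} - {j'}. h m)"
      using j' False by (intro sum.remove) auto
    moreover have "(\<Sum>m\<in>idxA N - {j} - {j'}. h m) = of_nat (N - 2) * (amp_off N t * cnj (amp_off N t) / (of_nat N)\<^sup>2)"
      using j j' False by (simp add: h_def numeral_2_eq_2)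
    ultimately have "(\<Sum>m\<in>idxA N. h m) = (amp_diag N t * cnj (amp_off N t) + amp_off N t * cnj (amp_diag N t)
        + of_nat (N - 2) * (amp_off N t * cnj (amp_off N t))) / (of_nat N)\<^sup>2"
      using False split_j by (simp add: h_def add_divide_distrib)
    also have "\<dots> = complex_of_real ((2 * (c\<^sup>2 - s\<^sup>2) + (real N - 2) * (c\<^sup>2 + s\<^sup>2 / q\<^sup>2)) / (real N)\<^sup>2)"
      unfolding products using N by (simp add: of_nat_diff)
    also have "\<dots> = complex_of_real (coherence N t / real N)"
      unfolding coherence_def c_def[symmetric] s_def[symmetric]
      by (subst marginal_offdiag_identity[OF q(1)]) (use q(2) in simp_all)
    finally show ?thesis using False by (simp add: ptrace2_grover_purif_eq_sum h_def grover_rho_def)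
  qed
qed

lemma coherence_has_derivative:
  assumes "N > 1"
  shows "(coherence N has_real_derivative
    2 * cos (grover_freq N * t) * (- sin (grover_freq N * t) * grover_freq N)
      - 2 * sin (grover_freq N * t) * (cos (grover_freq N * t) * grover_freq N) / (real N - 1)) (at t)"
proof -
  have "coherence N = (\<lambda>s. (cos (grover_freq N * s))\<^sup>2 - (sin (grover_freq N * s))\<^sup>2 * (1 / (real N - 1)))"
    by (simp add: coherence_def fun_eq_iff)
  then show ?thesis using assms by (auto intro!: derivative_eq_intros simp: power2_eq_square)
qed

lemma grover_rho_deriv:
  assumes N: "N > 1" and j: "j \<in> idxA N" and j': "j' \<in> idxA N"
  shows "((\<lambda>s. grover_rho N s j j') has_vector_derivative
    - \<i> * (complex_of_real pi * (grover_purif N t (j, j) (j', j) - grover_purif N t (j, j') (j', j')))) (at t)"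
proof (cases "j = j'")
  case True
  then show ?thesis by (simp add: grover_rho_def)
next
  case False
  define c where "c = cos (grover_freq N * t)"
  define s where "s = sin (grover_freq N * t)"
  define q where "q = sqrt (real N - 1)"
  have q: "q > 0" "q\<^sup>2 = real N - 1" unfolding q_def using N by auto
  define dq where "dq = 2 * c * (- s * grover_freq N) - 2 * s * (c * grover_freq N) / (real N - 1)"
  have "((\<lambda>s. complex_of_real (coherence N s / real N)) has_vector_derivative complex_of_real (dq / real N)) (at t)"
    unfolding dq_def c_def s_def by (intro has_vector_derivative_of_real DERIV_cdivide coherence_has_derivative N)
  moreover have "(\<lambda>s. grover_rho N s j j') = (\<lambda>s. complex_of_real (coherence N s / real N))"
    using False by (simp add: grover_rho_def)
  moreover have "- \<i> * (complex_of_real pi * (grover_purif N t (j, j) (j', j) - grover_purif N t (j, j') (j', j')))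
      = complex_of_real (dq / real N)"
  proof -
    have "j \<noteq> 0" "j' \<noteq> 0" using j j' by (auto simp: idxA_def)
    then have "grover_purif N t (j, j) (j', j) - grover_purif N t (j, j') (j', j')
        = (amp_diag N t * cnj (amp_off N t) - amp_off N t * cnj (amp_diag N t)) / (of_nat N)\<^sup>2"
      unfolding grover_purif_def grover_amp_def using False by (simp add: power2_eq_square diff_divide_distrib)
    also have "\<dots> = \<i> * complex_of_real (- 2 * c * s * (q + 1 / q) / (real N)\<^sup>2)"
      unfolding amp_products(4)[OF N, of t, folded c_def s_def q_def]
      by (simp only: of_real_divide of_real_power of_real_of_nat_eq mult.assoc times_divide_eq_right)
    finally have "- \<i> * (complex_of_real pi * (grover_purif N t (j, j) (j', j) - grover_purif N t (j, j') (j', j')))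
        = complex_of_real (pi * (- 2 * c * s * (q + 1 / q) / (real N)\<^sup>2))"
      by (simp add: complex_eq_iff)
    also have "pi * (- 2 * c * s * (q + 1 / q) / (real N)\<^sup>2) = dq / real N"
      unfolding dq_def grover_freq_def q_def[symmetric]
      by (rule coherence_rate_identity[OF q(1)]) (use q(2) in simp)
    finally show ?thesis .
  qed
  ultimately show ?thesis by simp
qed

lemma grover_amp_continuous: "N > 1 \<Longrightarrow> continuous_on S (\<lambda>t. grover_amp N t a)"
  unfolding grover_amp_def amp_diag_def amp_off_def
  by (cases "snd a = 0"; cases "fst a = snd a") (auto intro!: continuous_intros)

lemma grover_time_nonneg: "N > 1 \<Longrightarrow> 0 \<le> grover_time N"
proof -
  assume N: "N > 1"
  have "0 \<le> 1 / sqrt (real N)" "1 / sqrt (real N) \<le> 1" using N by auto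
  then have "0 \<le> arccos (1 / sqrt (real N))" by (intro arccos_lbound) linarith+
  then show "0 \<le> grover_time N" unfolding grover_time_def using N by simp
qed

lemma ptrace2_grover_final:
  assumes N: "N > 1" and j: "j \<in> idxA N"
  shows "ptrace2 (idxM N) (grover_final N) j j' = grover_rho N (grover_time N) j j'"
proof -
  have "ptrace2 (idxM N) (grover_final N) j j'
      = (\<Sum>m\<in>idxM N. if m = j then (if j = j' then complex_of_real (1 / real N) else 0) else 0)"
    unfolding ptrace2_def by (rule sum.cong[OF refl]) (auto simp: grover_final_def)
  also have "\<dots> = grover_rho N (grover_time N) j j'"
    using j by (simp add: idxA_imp_idxM grover_rho_def coherence_grover_time[OF N])
  finally show ?thesis .
qed

lemma grover_protocol_exists:
  assumes N: "N > 1"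
  shows "grover_protocol N (grover_time N) 1 (grover_rho N) (grover_purif N) (grover_final N)"
  unfolding grover_protocol_def
proof (intro conjI ballI)
  show "0 \<le> grover_time N" by (rule grover_time_nonneg[OF N])
next
  fix t
  have "psd_op (idxA N) (ptrace2 (idxM N) (grover_purif N t))"
    unfolding grover_purif_def idxAM_def[symmetric]
    by (intro psd_op_ptrace2 psd_op_rank_one[of "idxAM N", unfolded idxAM_def]) simp_all
  then show "psd_op (idxA N) (grover_rho N t)"
    by (subst psd_op_cong[where Y = "ptrace2 (idxM N) (grover_purif N t)"]) (auto simp: ptrace2_grover_purif[OF N])
next
  fix t
  show "psd_op (idxAM N) (grover_purif N t)" unfolding grover_purif_def by (rule psd_op_rank_one)
next
  show "psd_op (idxAM N) (grover_final N)"
    unfolding grover_final_def by (rule psd_op_diagonal) auto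
next
  fix a b
  show "continuous_on {0..grover_time N} (\<lambda>t. grover_purif N t a b)"
    unfolding grover_purif_def by (intro continuous_intros grover_amp_continuous N)
next
  fix j j'
  show "grover_rho N 0 j j' = psi0 N j * cnj (psi0 N j')"
    using N by (simp add: psi0_mult_cnj grover_rho_def coherence_def)
next
  fix t j j' assume "j \<in> idxA N" "j' \<in> idxA N"
  then show "ptrace2 (idxM N) (grover_purif N t) j j' = grover_rho N t j j'" by (simp add: ptrace2_grover_purif[OF N])
next
  fix t j j' assume j: "j \<in> idxA N" and j': "j' \<in> idxA N"
  show "((\<lambda>s. grover_rho N s j j') has_vector_derivative
      (- \<i> * ptrace2 (idxM N) (\<lambda>a b. op_mult (idxAM N) (groverH N) (grover_purif N t) a b
        - op_mult (idxAM N) (grover_purif N t) (groverH N) a b) j j')) (at t within {0..grover_time N})"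
    unfolding ptrace2_groverH_commutator[OF j j']
    by (rule has_vector_derivative_at_within, rule grover_rho_deriv[OF N j j'])
next
  fix j j' assume "j \<in> idxA N"
  then show "ptrace2 (idxM N) (grover_final N) j j' = grover_rho N (grover_time N) j j'"
    by (rule ptrace2_grover_final[OF N])
next
  fix x assume "x \<in> idxA N"
  then show "1 \<le> Re (op_trace (idxAM N) (op_mult (idxAM N) (groverPi N x) (grover_final N)))"
    using N by (simp add: op_trace_groverPi grover_final_def)
qed

section \<open>Asymptotics\<close>

lemma arccos_inverse_sqrt_eq_arctan:
  assumes N: "N > (1::nat)"
  shows "arccos (1 / sqrt (real N)) = arctan (sqrt (real N - 1))"
proof -
  have "0 < 1 / sqrt (real N)" "1 / sqrt (real N) < 1" using N by simp_all
  then have x: "-1 < 1 / sqrt (real N)" "1 / sqrt (real N) < 1" by linarith+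
  have "(1 / sqrt (real N))\<^sup>2 = 1 / real N" using N by (simp add: power_divide)
  then have "sqrt (1 - (1 / sqrt (real N))\<^sup>2) = sqrt (real N - 1) / sqrt (real N)"
    using N by (simp add: field_simps real_sqrt_divide)
  then have "1 / sqrt (real N) / sqrt (1 - (1 / sqrt (real N))\<^sup>2) = 1 / sqrt (real N - 1)"
    using N by simp
  then have "arccos (1 / sqrt (real N)) = pi / 2 - arctan (1 / sqrt (real N - 1))"
    using arccos_arctan[OF x] by simp
  also have "arctan (1 / sqrt (real N - 1)) = pi / 2 - arctan (sqrt (real N - 1))"
    using arctan_inverse[of "sqrt (real N - 1)"] N by (simp add: inverse_eq_divide)
  finally show ?thesis by simp
qed

lemma grover_time_asymptotics:
  "(\<lambda>N. grover_time N - (sqrt (real N) / 2 - 1 / pi)) \<in> O(\<lambda>N. 1 / sqrt (real N))"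
proof -
  have ev: "eventually (\<lambda>N. grover_time N - (sqrt (real N) / 2 - 1 / pi)
      = 1 / pi * real N / sqrt (real N - 1) * arctan (sqrt (real N - 1)) - (sqrt (real N) / 2 - 1 / pi)) at_top"
    using eventually_gt_at_top[of 1] by eventually_elim (simp add: grover_time_def arccos_inverse_sqrt_eq_arctan)
  have "(\<lambda>N::nat. 1 / pi * real N / sqrt (real N - 1) * arctan (sqrt (real N - 1))
      - (sqrt (real N) / 2 - 1 / pi)) \<in> O(\<lambda>N. 1 / sqrt (real N))"
    by real_asymp
  then show ?thesis using landau_o.big.in_cong[OF ev] by simp
qed

theorem mainTheorem2:
  shows "(\<forall>N::nat. N > 1 \<longrightarrow>
      (\<exists>\<rho> \<rho>t \<rho>'. grover_protocol N
          (1 / pi * real N / sqrt (real N - 1) * arccos (1 / sqrt (real N))) 1 \<rho> \<rho>t \<rho>') \<and>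
      (\<forall>T \<rho> \<rho>t \<rho>'. grover_protocol N T 1 \<rho> \<rho>t \<rho>' \<longrightarrow>
          1 / pi * real N / sqrt (real N - 1) * arccos (1 / sqrt (real N)) \<le> T)) \<and>
    (\<lambda>N::nat. 1 / pi * real N / sqrt (real N - 1) * arccos (1 / sqrt (real N))
               - (sqrt (real N) / 2 - 1 / pi)) \<in> O(\<lambda>N. 1 / sqrt (real N))"
  using grover_protocol_exists grover_time_le grover_time_asymptotics
  unfolding grover_time_def by blast

end
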